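(* Let $Q_+$ be an affine semigroup with $Q=\mathbb{Z}Q_+\cong\mathbb{Z}^d$, and let $\{M^1_n\}_{n\in\mathbb{Z}^k},\dots,\{M^r_n\}_{n\in\mathbb{Z}^k}$ be constructible families of $Q$-modules. Then the functions $n\mapsto\max\{i\mid M^i_n\neq0\}$ and $n\mapsto\min\{i\mid M^i_n\neq0\}$ (defined for those $n$ where some $M^i_n\neq0$) are piecewise quasiconstant, i.e., piecewise quasipolynomial of degree $0$.
   Context: $\Bbbk$ is a field; an affine semigroup is a finitely generated submonoid with trivial units of a free abelian group, and $Q$ is ordered by $q\preceq q'$ iff $q'-q\in Q_+$. Semisimple subset: finite disjoint union of sets $q+N$ with $N$ generated by linearly independent elements. A Presburger group is a partially ordered free abelian group of finite rank whose positive cone is semisimple and generates a finite-index subgroup. A module over a Presburger group $G$ (a $G$-graded $\Bbbk[G_+]$-module) is constructible if its graded pieces are finite-dimensional and $G$ can be partitioned into finitely many semisimple regions $I$ with vector spaces $M_I$ and isomorphisms $M_I\to M_g$ ($g\in I$) such that for $g\in I$, $h\in J$, $g\preceq h$, the composite $M_I\to M_g\to M_h\to M_J$ depends only on $I,J$. A family $\{M_n\}_{n\in\mathbb{Z}^k}$ of $Q$-modules is constructible if for some Presburger group $G=\mathbb{Z}^k\times Q$ whose positive cone $G_+$ satisfies $G_+\cap(\{0\}\times Q)=\{0\}\times Q_+$ (a Rees monoid), the direct sum $\bigoplus_nM_n(-n)$ with $M_n$ in slice $\{n\}\times Q$ is a $G$-graded $\Bbbk[G_+]$-module extending the slice structures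 and is constructible. Piecewise quasipolynomial: on each of finitely many rational convex polyhedra covering $\mathbb{Z}^k$, the function agrees with a function that is polynomial on each coset of some finite-index sublattice. *)

theory Defs
  imports "Jordan_Normal_Form.Matrix"
begin

type_synonym zvec = "nat \<Rightarrow> int"

definition Zv :: "nat \<Rightarrow> zvec set" where
  "Zv m = {v. \<forall>i\<ge>m. v i = 0}"

definition vzero :: zvec where "vzero = (\<lambda>i. 0)"
definition vadd :: "zvec \<Rightarrow> zvec \<Rightarrow> zvec" where "vadd x y = (\<lambda>i. x i + y i)"
definition vneg :: "zvec \<Rightarrow> zvec" where "vneg x = (\<lambda>i. - x i)"
definition vsub :: "zvec \<Rightarrow> zvec \<Rightarrow> zvec" where "vsub x y = (\<lambda>i. x i - y i)"
definition smul :: "int \<Rightarrow> zvec \<Rightarrow> zvec" where "smul c v = (\<lambda>i. c * v i)"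

definition lincomb :: "(nat \<Rightarrow> int) \<Rightarrow> zvec list \<Rightarrow> zvec" where
  "lincomb c vs = (\<lambda>i. (\<Sum>j<length vs. c j * (vs ! j) i))"

definition lin_indep :: "zvec list \<Rightarrow> bool" where
  "lin_indep vs \<longleftrightarrow> (\<forall>c. lincomb c vs = vzero \<longrightarrow> (\<forall>j<length vs. c j = 0))"

definition nat_span :: "zvec list \<Rightarrow> zvec set" where
  "nat_span vs = {lincomb (\<lambda>j. int (c j)) vs | c :: nat \<Rightarrow> nat. True}"

definition int_span :: "zvec set \<Rightarrow> zvec set" where
  "int_span S = {lincomb c vs | c vs. set vs \<subseteq> S}"

definition semisimple :: "nat \<Rightarrow> zvec set \<Rightarrow> bool" where
  "semisimple m S \<longleftrightarrow> S \<subseteq> Zv m \<and>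
     (\<exists>parts :: (zvec \<times> zvec list) list.
        (\<forall>(q, vs) \<in> set parts. q \<in> Zv m \<and> set vs \<subseteq> Zv m \<and> lin_indep vs) \<and>
        S = (\<Union>(q, vs) \<in> set parts. vadd q ` nat_span vs) \<and>
        (\<forall>i<length parts. \<forall>j<length parts. i \<noteq> j \<longrightarrow>
           (vadd (fst (parts ! i)) ` nat_span (snd (parts ! i))) \<inter>
           (vadd (fst (parts ! j)) ` nat_span (snd (parts ! j))) = {}))"

definition finite_index :: "nat \<Rightarrow> zvec set \<Rightarrow> bool" where
  "finite_index m H \<longleftrightarrow> finite ((\<lambda>x. vadd x ` H) ` Zv m)"

definition subgroup_Z :: "nat \<Rightarrow> zvec set \<Rightarrow> bool" where
  "subgroup_Z m L \<longleftrightarrow> L \<subseteq> Zv m \<and> vzero \<in> L \<and>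
     (\<forall>x\<in>L. \<forall>y\<in>L. vadd x y \<in> L) \<and> (\<forall>x\<in>L. vneg x \<in> L)"

text \<open>Positive cone of a Presburger group structure on Z^m (partial order g <= h iff h - g in P)\<close>
definition presburger_cone :: "nat \<Rightarrow> zvec set \<Rightarrow> bool" where
  "presburger_cone m P \<longleftrightarrow> P \<subseteq> Zv m \<and> vzero \<in> P \<and>
     (\<forall>x\<in>P. \<forall>y\<in>P. vadd x y \<in> P) \<and>
     P \<inter> vneg ` P = {vzero} \<and>
     semisimple m P \<and> finite_index m (int_span P)"

definition affine_semigroup :: "nat \<Rightarrow> zvec set \<Rightarrow> bool" where
  "affine_semigroup d Qp \<longleftrightarrow> Qp \<subseteq> Zv d \<and>
     (\<exists>gens. set gens \<subseteq> Zv d \<and> Qp = nat_span gens) \<and>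
     Qp \<inter> vneg ` Qp = {vzero}"

text \<open>A Z^m-graded k[P]-module with finite-dimensional graded pieces, given by the
  dimension dm g of the piece in degree g (the piece being k^(dm g)) and the matrix
  act a g : M_g -> M_(g+a) of multiplication by the monomial x^a, a in P.\<close>
definition gmodule :: "nat \<Rightarrow> zvec set \<Rightarrow> (zvec \<Rightarrow> nat) \<Rightarrow> (zvec \<Rightarrow> zvec \<Rightarrow> 'k::field mat) \<Rightarrow> bool" where
  "gmodule m P dm act \<longleftrightarrow>
     (\<forall>a\<in>P. \<forall>g\<in>Zv m. act a g \<in> carrier_mat (dm (vadd g a)) (dm g)) \<and>
     (\<forall>g\<in>Zv m. act vzero g = 1\<^sub>m (dm g)) \<and>
     (\<forall>a\<in>P. \<forall>b\<in>P. \<forall>g\<in>Zv m. act (vadd a b) g = act b (vadd g a) * act a g)"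

definition constructible_gmod :: "nat \<Rightarrow> zvec set \<Rightarrow> (zvec \<Rightarrow> nat) \<Rightarrow> (zvec \<Rightarrow> zvec \<Rightarrow> 'k::field mat) \<Rightarrow> bool" where
  "constructible_gmod m P dm act \<longleftrightarrow>
     (\<exists>(regions :: zvec set list) (dI :: nat \<Rightarrow> nat) (phi :: nat \<Rightarrow> zvec \<Rightarrow> 'k mat) (psi :: nat \<Rightarrow> nat \<Rightarrow> 'k mat).
        (\<forall>j<length regions. semisimple m (regions ! j)) \<and>
        (\<forall>i<length regions. \<forall>j<length regions. i \<noteq> j \<longrightarrow> regions ! i \<inter> regions ! j = {}) \<and>
        \<Union>(set regions) = Zv m \<and>
        (\<forall>j<length regions. \<forall>g\<in>regions ! j.
            phi j g \<in> carrier_mat (dm g) (dI j) \<and> invertible_mat (phi j g)) \<and>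
        (\<forall>i<length regions. \<forall>j<length regions. \<forall>g\<in>regions ! i. \<forall>h\<in>regions ! j.
            vsub h g \<in> P \<longrightarrow>
              psi i j \<in> carrier_mat (dI j) (dI i) \<and>
              act (vsub h g) g * phi i g = phi j h * psi i j))"

definition emb :: "nat \<Rightarrow> zvec \<Rightarrow> zvec \<Rightarrow> zvec" where
  "emb k n q = (\<lambda>i. if i < k then n i else q (i - k))"

text \<open>A constructible family {M_n}_(n in Z^k) of Q-modules, Q = Z^d with positive cone Qp;
  M_n has graded pieces of dimension dimf n q and action matrices actf n a q.\<close>
definition constructible_family ::
  "nat \<Rightarrow> nat \<Rightarrow> zvec set \<Rightarrow> (zvec \<Rightarrow> zvec \<Rightarrow> nat) \<Rightarrow> (zvec \<Rightarrow> zvec \<Rightarrow> zvec \<Rightarrow> 'k::field mat) \<Rightarrow> bool" where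
  "constructible_family k d Qp dimf actf \<longleftrightarrow>
     (\<forall>n\<in>Zv k. gmodule d Qp (dimf n) (actf n)) \<and>
     (\<exists>P (dm :: zvec \<Rightarrow> nat) (act :: zvec \<Rightarrow> zvec \<Rightarrow> 'k mat).
        presburger_cone (k + d) P \<and>
        P \<inter> emb k vzero ` Zv d = emb k vzero ` Qp \<and>
        gmodule (k + d) P dm act \<and>
        (\<forall>n\<in>Zv k. \<forall>q\<in>Zv d. dm (emb k n q) = dimf n q) \<and>
        (\<forall>n\<in>Zv k. \<forall>q\<in>Zv d. \<forall>a\<in>Qp. act (emb k vzero a) (emb k n q) = actf n a q) \<and>
        constructible_gmod (k + d) P dm act)"

definition rat_polyhedron :: "nat \<Rightarrow> ((nat \<Rightarrow> rat) \<times> rat) list \<Rightarrow> (nat \<Rightarrow> real) set" where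
  "rat_polyhedron k ineqs = {x. (\<forall>i\<ge>k. x i = 0) \<and>
     (\<forall>(a, b) \<in> set ineqs. (\<Sum>i<k. of_rat (a i) * x i) \<le> of_rat b)}"

definition int_to_real :: "zvec \<Rightarrow> (nat \<Rightarrow> real)" where
  "int_to_real n = (\<lambda>i. of_int (n i))"

definition piecewise_quasiconstant :: "nat \<Rightarrow> zvec set \<Rightarrow> (zvec \<Rightarrow> 'b) \<Rightarrow> bool" where
  "piecewise_quasiconstant k D f \<longleftrightarrow>
     (\<exists>polys :: ((nat \<Rightarrow> rat) \<times> rat) list list.
        (\<forall>n\<in>Zv k. \<exists>P\<in>set polys. int_to_real n \<in> rat_polyhedron k P) \<and>
        (\<forall>P\<in>set polys. \<exists>L (c :: zvec \<Rightarrow> 'b).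
            subgroup_Z k L \<and> finite_index k L \<and>
            (\<forall>x\<in>Zv k. \<forall>y\<in>Zv k. vsub x y \<in> L \<longrightarrow> c x = c y) \<and>
            (\<forall>n\<in>D. int_to_real n \<in> rat_polyhedron k P \<longrightarrow> f n = c n)))"

end

theory Submission
  imports Defs "HOL-Decision_Procs.Cooper"
begin

text \<open>
  Constructibility makes the support of each total module a finite union of semisimple
  sets, so the support of the family \<open>n \<mapsto> M\<^sub>n\<close> is a finite union of projections to
  \<open>\<int>\<^sup>k\<close> of translated finitely generated monoids. Such a projection is defined by an
  existential Presburger formula; after quantifier elimination (Cooper) it is a boolean
  combination of linear inequalities and congruences, and every such set coincides, on each
  cell of a suitable rational polyhedral cover, with a set periodic modulo some \<open>m\<int>\<^sup>k\<close>.
  Refining the covers of the \<open>r\<close> supports to a common one, the set of indices \<open>i\<close> with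
  \<open>M\<^sup>i\<^sub>n \<noteq> 0\<close>, and hence any function of it such as its maximum or minimum, is
  quasiconstant on each cell.
\<close>

section \<open>Piecewise periodic sets\<close>

definition scaled_lattice :: "nat \<Rightarrow> nat \<Rightarrow> zvec set" where
  "scaled_lattice k m = {v \<in> Zv k. \<forall>i<k. int m dvd v i}"

definition periodic_mod :: "nat \<Rightarrow> nat \<Rightarrow> zvec set \<Rightarrow> bool" where
  "periodic_mod k m X \<longleftrightarrow>
     (\<forall>x\<in>Zv k. \<forall>y\<in>Zv k. vsub x y \<in> scaled_lattice k m \<longrightarrow> (x \<in> X \<longleftrightarrow> y \<in> X))"

definition polyhedral_cover :: "nat \<Rightarrow> ((nat \<Rightarrow> rat) \<times> rat) list list \<Rightarrow> bool" where
  "polyhedral_cover k ps \<longleftrightarrow> (\<forall>n\<in>Zv k. \<exists>P\<in>set ps. int_to_real n \<in> rat_polyhedron k P)"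

definition agree_on :: "nat \<Rightarrow> (nat \<Rightarrow> real) set \<Rightarrow> zvec set \<Rightarrow> zvec set \<Rightarrow> bool" where
  "agree_on k S X Y \<longleftrightarrow> (\<forall>n\<in>Zv k. int_to_real n \<in> S \<longrightarrow> (n \<in> X \<longleftrightarrow> n \<in> Y))"

definition piecewise_periodic :: "nat \<Rightarrow> zvec set \<Rightarrow> bool" where
  "piecewise_periodic k X \<longleftrightarrow> (\<exists>ps. polyhedral_cover k ps \<and> (\<forall>P\<in>set ps. \<exists>m>0. \<exists>Y.
      periodic_mod k m Y \<and> agree_on k (rat_polyhedron k P) X Y))"

lemma subgroup_scaled_lattice: "subgroup_Z k (scaled_lattice k m)"
  unfolding subgroup_Z_def scaled_lattice_def Zv_def vzero_def vadd_def vneg_def by auto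

lemma scaled_lattice_antimono: "m dvd m' \<Longrightarrow> scaled_lattice k m' \<subseteq> scaled_lattice k m"
  using dvd_trans[of "int m" "int m'"] unfolding scaled_lattice_def by auto

lemma periodic_mod_dvd: "periodic_mod k m X \<Longrightarrow> m dvd m' \<Longrightarrow> periodic_mod k m' X"
  unfolding periodic_mod_def using scaled_lattice_antimono by blast

lemma scaled_lattice_coset_eq:
  assumes "vsub x y \<in> scaled_lattice k m"
  shows "vadd x ` scaled_lattice k m = vadd y ` scaled_lattice k m"
proof -
  have "vadd x z = vadd y (vadd (vsub x y) z)" "vadd y z = vadd x (vadd (vneg (vsub x y)) z)" for z
    by (auto simp: vadd_def vsub_def vneg_def)
  with subgroup_scaled_lattice[of k m] assms show ?thesis
    unfolding subgroup_Z_def by (auto intro!: image_eqI)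
qed

lemma finite_index_scaled_lattice:
  assumes "m > 0"
  shows "finite_index k (scaled_lattice k m)"
proof -
  let ?coset = "\<lambda>x. vadd x ` scaled_lattice k m"
  define R where "R = {r :: zvec. \<forall>i. (i \<in> {..<k} \<longrightarrow> r i \<in> {0..<int m}) \<and> (i \<notin> {..<k} \<longrightarrow> r i = 0)}"
  have "finite R"
    unfolding R_def by (rule finite_set_of_finite_funs) auto
  moreover have "?coset ` Zv k \<subseteq> ?coset ` R"
  proof clarify
    fix x assume x: "x \<in> Zv k"
    define r where "r = (\<lambda>i. if i < k then x i mod int m else 0)"
    have "r \<in> R" using assms unfolding R_def r_def by auto
    moreover have "vsub x r \<in> scaled_lattice k m"
      using x unfolding scaled_lattice_def Zv_def vsub_def r_def
      by (auto simp: mod_eq_0_iff_dvd[symmetric] mod_diff_left_eq[symmetric])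
    ultimately show "?coset x \<in> ?coset ` R"
      using scaled_lattice_coset_eq by blast
  qed
  ultimately show ?thesis
    unfolding finite_index_def using finite_subset by blast
qed

lemma rat_polyhedron_append:
  "rat_polyhedron k (P @ Q) = rat_polyhedron k P \<inter> rat_polyhedron k Q"
  unfolding rat_polyhedron_def by auto

lemma polyhedral_cover_refine:
  assumes "polyhedral_cover k ps1" "polyhedral_cover k ps2"
  shows "\<exists>ps. polyhedral_cover k ps \<and> (\<forall>R\<in>set ps. \<exists>P\<in>set ps1. \<exists>Q\<in>set ps2.
           rat_polyhedron k R = rat_polyhedron k P \<inter> rat_polyhedron k Q)"
proof (intro exI conjI)
  let ?ps = "map (\<lambda>(P, Q). P @ Q) (List.product ps1 ps2)"
  show "polyhedral_cover k ?ps"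
    using assms unfolding polyhedral_cover_def by (fastforce simp: rat_polyhedron_append)
  show "\<forall>R\<in>set ?ps. \<exists>P\<in>set ps1. \<exists>Q\<in>set ps2.
          rat_polyhedron k R = rat_polyhedron k P \<inter> rat_polyhedron k Q"
    by (auto simp: rat_polyhedron_append)
qed

lemma agree_on_subset: "S' \<subseteq> S \<Longrightarrow> agree_on k S X Y \<Longrightarrow> agree_on k S' X Y"
  unfolding agree_on_def by blast

lemma polyhedral_cover_whole_space: "polyhedral_cover k [[]]"
  unfolding polyhedral_cover_def rat_polyhedron_def int_to_real_def Zv_def by auto

lemma piecewise_periodic_common_cover:
  assumes "finite I" "\<forall>i\<in>I. piecewise_periodic k (X i)"
  shows "\<exists>ps. polyhedral_cover k ps \<and> (\<forall>P\<in>set ps. \<exists>m>0. \<exists>Y. \<forall>i\<in>I.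
           periodic_mod k m (Y i) \<and> agree_on k (rat_polyhedron k P) (X i) (Y i))"
  using assms
proof (induction I rule: finite_induct)
  case empty
  then show ?case using polyhedral_cover_whole_space by blast
next
  case (insert j I)
  then obtain ps1 where ps1: "polyhedral_cover k ps1" "\<forall>P\<in>set ps1. \<exists>m>0. \<exists>Y. \<forall>i\<in>I.
           periodic_mod k m (Y i) \<and> agree_on k (rat_polyhedron k P) (X i) (Y i)" by auto
  obtain ps2 where ps2: "polyhedral_cover k ps2" "\<forall>Q\<in>set ps2. \<exists>m>0. \<exists>Y.
           periodic_mod k m Y \<and> agree_on k (rat_polyhedron k Q) (X j) Y"
    using insert.prems unfolding piecewise_periodic_def by auto
  obtain ps where ps: "polyhedral_cover k ps" "\<forall>R\<in>set ps. \<exists>P\<in>set ps1. \<exists>Q\<in>set ps2.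
           rat_polyhedron k R = rat_polyhedron k P \<inter> rat_polyhedron k Q"
    using polyhedral_cover_refine[OF ps1(1) ps2(1)] by blast
  have "\<exists>m>0. \<exists>Y. \<forall>i\<in>insert j I.
          periodic_mod k m (Y i) \<and> agree_on k (rat_polyhedron k R) (X i) (Y i)"
    if "R \<in> set ps" for R
  proof -
    obtain P Q where PQ: "P \<in> set ps1" "Q \<in> set ps2"
      "rat_polyhedron k R = rat_polyhedron k P \<inter> rat_polyhedron k Q"
      using ps(2) \<open>R \<in> set ps\<close> by blast
    obtain m1 Y1 where m1: "m1 > 0" "\<forall>i\<in>I.
        periodic_mod k m1 (Y1 i) \<and> agree_on k (rat_polyhedron k P) (X i) (Y1 i)"
      using ps1(2) PQ(1) by blast
    obtain m2 Y2 where m2: "m2 > 0" "periodic_mod k m2 Y2"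
        "agree_on k (rat_polyhedron k Q) (X j) Y2"
      using ps2(2) PQ(2) by blast
    have "periodic_mod k (m1 * m2) ((Y1(j := Y2)) i) \<and>
          agree_on k (rat_polyhedron k R) (X i) ((Y1(j := Y2)) i)" if "i \<in> insert j I" for i
      using that m1 m2 PQ(3) by (auto intro: periodic_mod_dvd agree_on_subset)
    with m1 m2 show ?thesis by (metis nat_0_less_mult_iff)
  qed
  with ps(1) show ?case by blast
qed

lemma indicator_set_eq_if_periodic:
  assumes "\<forall>i\<in>I. periodic_mod k m (Y i)" "x \<in> Zv k" "y \<in> Zv k" "vsub x y \<in> scaled_lattice k m"
  shows "{i\<in>I. x \<in> Y i} = {i\<in>I. y \<in> Y i}"
  using assms unfolding periodic_mod_def by blast

lemma indicator_set_eq_if_agree: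
  assumes "\<forall>i\<in>I. agree_on k S (X i) (Y i)" "n \<in> Zv k" "int_to_real n \<in> S"
  shows "{i\<in>I. n \<in> X i} = {i\<in>I. n \<in> Y i}"
  using assms unfolding agree_on_def by blast

lemma piecewise_periodic_fun_of_indicators:
  assumes "finite I" "\<forall>i\<in>I. piecewise_periodic k (X i)"
  shows "piecewise_periodic k {n. \<Phi> {i\<in>I. n \<in> X i}}"
proof -
  obtain ps where ps: "polyhedral_cover k ps" "\<forall>R\<in>set ps. \<exists>m>0. \<exists>Y. \<forall>i\<in>I.
      periodic_mod k m (Y i) \<and> agree_on k (rat_polyhedron k R) (X i) (Y i)"
    using piecewise_periodic_common_cover[OF assms] by blast
  have "\<exists>m>0. \<exists>Z. periodic_mod k m Z \<and> agree_on k (rat_polyhedron k R) {n. \<Phi> {i\<in>I. n \<in> X i}} Z"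
    if "R \<in> set ps" for R
  proof -
    obtain m Y where "m > 0" and per: "\<forall>i\<in>I. periodic_mod k m (Y i)"
      and agree: "\<forall>i\<in>I. agree_on k (rat_polyhedron k R) (X i) (Y i)"
      using ps(2) \<open>R \<in> set ps\<close> by blast
    let ?Z = "{n. \<Phi> {i\<in>I. n \<in> Y i}}"
    have "periodic_mod k m ?Z"
      unfolding periodic_mod_def[of k m ?Z]
    proof (intro ballI impI)
      fix x y assume "x \<in> Zv k" "y \<in> Zv k" "vsub x y \<in> scaled_lattice k m"
      from indicator_set_eq_if_periodic[OF per this] show "x \<in> ?Z \<longleftrightarrow> y \<in> ?Z" by simp
    qed
    moreover have "agree_on k (rat_polyhedron k R) {n. \<Phi> {i\<in>I. n \<in> X i}} ?Z"
      unfolding agree_on_def[of k _ _ ?Z]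
    proof (intro ballI impI)
      fix n assume "n \<in> Zv k" "int_to_real n \<in> rat_polyhedron k R"
      from indicator_set_eq_if_agree[OF agree this]
      show "n \<in> {n. \<Phi> {i\<in>I. n \<in> X i}} \<longleftrightarrow> n \<in> ?Z" by simp
    qed
    ultimately show ?thesis using \<open>m > 0\<close> by blast
  qed
  with ps(1) show ?thesis
    unfolding piecewise_periodic_def by blast
qed

lemma piecewise_periodic_binop:
  assumes "piecewise_periodic k {n. P n}" "piecewise_periodic k {n. Q n}"
  shows "piecewise_periodic k {n. h (P n) (Q n)}"
proof -
  let ?X = "\<lambda>b. if b then {n. P n} else {n. Q n}"
  have "\<forall>b\<in>UNIV. piecewise_periodic k (?X b)"
    using assms by (simp add: all_bool_eq)
  from piecewise_periodic_fun_of_indicators[OF finite_class.finite_UNIV this,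
      of "\<lambda>S. h (True \<in> S) (False \<in> S)"]
  show ?thesis by simp
qed

lemma piecewise_periodic_UN:
  assumes "finite J" "\<forall>j\<in>J. piecewise_periodic k (X j)"
  shows "piecewise_periodic k (\<Union>j\<in>J. X j)"
proof -
  have "piecewise_periodic k {n. {j\<in>J. n \<in> X j} \<noteq> {}}"
    by (rule piecewise_periodic_fun_of_indicators[OF assms])
  also have "{n. {j\<in>J. n \<in> X j} \<noteq> {}} = (\<Union>j\<in>J. X j)"
    by blast
  finally show ?thesis .
qed

lemma piecewise_periodic_const: "piecewise_periodic k {n. b}"
  unfolding piecewise_periodic_def periodic_mod_def agree_on_def
  using polyhedral_cover_whole_space by fastforce

lemma piecewise_periodic_cong:
  "piecewise_periodic k X \<Longrightarrow> X \<inter> Zv k = Y \<inter> Zv k \<Longrightarrow> piecewise_periodic k Y"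
  unfolding piecewise_periodic_def agree_on_def by (metis IntI Int_iff)

lemma piecewise_quasiconstant_fun_of_indicators:
  assumes "finite I" "\<forall>i\<in>I. piecewise_periodic k (X i)" "D \<subseteq> Zv k"
  shows "piecewise_quasiconstant k D (\<lambda>n. \<Phi> {i\<in>I. n \<in> X i})"
proof -
  obtain ps where ps: "polyhedral_cover k ps" "\<forall>R\<in>set ps. \<exists>m>0. \<exists>Y. \<forall>i\<in>I.
      periodic_mod k m (Y i) \<and> agree_on k (rat_polyhedron k R) (X i) (Y i)"
    using piecewise_periodic_common_cover[OF assms(1,2)] by blast
  have "\<exists>L c. subgroup_Z k L \<and> finite_index k L \<and>
          (\<forall>x\<in>Zv k. \<forall>y\<in>Zv k. vsub x y \<in> L \<longrightarrow> c x = c y) \<and>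
          (\<forall>n\<in>D. int_to_real n \<in> rat_polyhedron k R \<longrightarrow> \<Phi> {i\<in>I. n \<in> X i} = c n)"
    if "R \<in> set ps" for R
  proof -
    obtain m Y where "m > 0" and per: "\<forall>i\<in>I. periodic_mod k m (Y i)"
      and agree: "\<forall>i\<in>I. agree_on k (rat_polyhedron k R) (X i) (Y i)"
      using ps(2) \<open>R \<in> set ps\<close> by blast
    let ?c = "\<lambda>n. \<Phi> {i\<in>I. n \<in> Y i}"
    have "\<forall>x\<in>Zv k. \<forall>y\<in>Zv k. vsub x y \<in> scaled_lattice k m \<longrightarrow> ?c x = ?c y"
    proof (intro ballI impI)
      fix x y assume "x \<in> Zv k" "y \<in> Zv k" "vsub x y \<in> scaled_lattice k m"
      from indicator_set_eq_if_periodic[OF per this] show "?c x = ?c y" by simp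
    qed
    moreover have "\<forall>n\<in>D. int_to_real n \<in> rat_polyhedron k R \<longrightarrow> \<Phi> {i\<in>I. n \<in> X i} = ?c n"
    proof (intro ballI impI)
      fix n assume "n \<in> D" "int_to_real n \<in> rat_polyhedron k R"
      with assms(3) have "n \<in> Zv k" by blast
      from indicator_set_eq_if_agree[OF agree this \<open>int_to_real n \<in> rat_polyhedron k R\<close>]
      show "\<Phi> {i\<in>I. n \<in> X i} = ?c n" by simp
    qed
    ultimately show ?thesis
      using subgroup_scaled_lattice finite_index_scaled_lattice[OF \<open>m > 0\<close>]
      by (intro exI[of _ "scaled_lattice k m"] exI[of _ ?c]) simp
  qed
  with ps(1) show ?thesis
    unfolding piecewise_quasiconstant_def polyhedral_cover_def by blast
qed

section \<open>Presburger-definable sets are piecewise periodic\<close>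

definition affine_form :: "nat \<Rightarrow> (zvec \<Rightarrow> int) \<Rightarrow> bool" where
  "affine_form k l \<longleftrightarrow> (\<exists>a b. \<forall>n. l n = (\<Sum>i<k. a i * n i) + b)"

lemma affine_form_const: "affine_form k (\<lambda>n. c)"
  unfolding affine_form_def by (rule exI[of _ "\<lambda>i. 0"]) simp

lemma affine_form_coord: "j < k \<Longrightarrow> affine_form k (\<lambda>n. n j)"
  unfolding affine_form_def
proof (intro exI allI)
  fix n :: zvec assume "j < k"
  have "(\<Sum>i<k. of_bool (i = j) * n i) = (\<Sum>i<k. if i = j then n i else 0)"
    by (rule sum.cong) auto
  with \<open>j < k\<close> show "n j = (\<Sum>i<k. of_bool (i = j) * n i) + 0"
    by simp
qed

lemma affine_form_add: "affine_form k l \<Longrightarrow> affine_form k l' \<Longrightarrow> affine_form k (\<lambda>n. l n + l' n)"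
  unfolding affine_form_def
proof (elim exE)
  fix a b a' b'
  assume "\<forall>n. l n = (\<Sum>i<k. a i * n i) + b" "\<forall>n. l' n = (\<Sum>i<k. a' i * n i) + b'"
  then show "\<exists>a b. \<forall>n. l n + l' n = (\<Sum>i<k. a i * n i) + b"
    by (intro exI[of _ "\<lambda>i. a i + a' i"] exI[of _ "b + b'"]) (simp add: algebra_simps sum.distrib)
qed

lemma affine_form_scale: "affine_form k l \<Longrightarrow> affine_form k (\<lambda>n. c * l n)"
  unfolding affine_form_def
proof (elim exE)
  fix a b assume "\<forall>n. l n = (\<Sum>i<k. a i * n i) + b"
  then show "\<exists>a b. \<forall>n. c * l n = (\<Sum>i<k. a i * n i) + b"
    by (intro exI[of _ "\<lambda>i. c * a i"] exI[of _ "c * b"]) (simp add: algebra_simps sum_distrib_left)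
qed

lemma affine_form_mod_eq:
  assumes "affine_form k l" "vsub x y \<in> scaled_lattice k m"
  shows "l x mod int m = l y mod int m"
proof -
  obtain a b where l: "\<forall>n. l n = (\<Sum>i<k. a i * n i) + b"
    using assms(1) unfolding affine_form_def by blast
  have "l x - l y = (\<Sum>i<k. a i * (x i - y i))"
    using l by (simp add: sum_subtractf right_diff_distrib)
  moreover have "int m dvd (\<Sum>i<k. a i * (x i - y i))"
    using assms(2) unfolding scaled_lattice_def vsub_def by (auto intro!: dvd_sum)
  ultimately show ?thesis by (simp add: mod_eq_dvd_iff)
qed

lemma affine_form_nonpos_polyhedron:
  assumes "affine_form k l"
  obtains P where "\<forall>n\<in>Zv k. int_to_real n \<in> rat_polyhedron k P \<longleftrightarrow> l n \<le> 0"
proof -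
  obtain a b where l: "\<forall>n. l n = (\<Sum>i<k. a i * n i) + b"
    using assms unfolding affine_form_def by blast
  let ?P = "[(\<lambda>i. rat_of_int (a i), rat_of_int (- b))]"
  have "int_to_real n \<in> rat_polyhedron k ?P \<longleftrightarrow> l n \<le> 0" if "n \<in> Zv k" for n
  proof -
    have "(\<Sum>i<k. of_rat (rat_of_int (a i)) * int_to_real n i) = of_int (l n - b)"
      using l by (simp add: int_to_real_def)
    moreover have "\<forall>i\<ge>k. int_to_real n i = 0"
      using that unfolding Zv_def int_to_real_def by simp
    ultimately show ?thesis
      unfolding rat_polyhedron_def by (simp add: of_rat_minus of_rat_of_int_eq)
  qed
  then show ?thesis using that by blast
qed

lemma sgn_mod_representative:
  fixes v :: int
  assumes "m > 0"
  shows "sgn (v mod m + sgn v * m) = sgn v" and "m dvd v - (v mod m + sgn v * m)"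
proof -
  have "0 \<le> v mod m" "v mod m < m"
    using assms by simp_all
  then show "sgn (v mod m + sgn v * m) = sgn v"
    by (auto simp: sgn_if)
  have "v - (v mod m + sgn v * m) = m * (v div m - sgn v)"
    using div_mult_mod_eq[of v m] by (simp add: algebra_simps)
  then show "m dvd v - (v mod m + sgn v * m)" by simp
qed

lemma piecewise_periodic_affine_atom:
  assumes l: "affine_form k l" and "m > 0"
    and R: "\<And>v w. sgn v = sgn w \<Longrightarrow> int m dvd v - w \<Longrightarrow> R v \<longleftrightarrow> R w"
  shows "piecewise_periodic k {n. R (l n)}"
proof -
  obtain Pneg where Pneg: "\<forall>n\<in>Zv k. int_to_real n \<in> rat_polyhedron k Pneg \<longleftrightarrow> l n + 1 \<le> 0"
    using affine_form_nonpos_polyhedron affine_form_add[OF l affine_form_const] by blast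
  obtain Ple where Ple: "\<forall>n\<in>Zv k. int_to_real n \<in> rat_polyhedron k Ple \<longleftrightarrow> l n \<le> 0"
    using affine_form_nonpos_polyhedron l by blast
  obtain Pge where Pge: "\<forall>n\<in>Zv k. int_to_real n \<in> rat_polyhedron k Pge \<longleftrightarrow> -1 * l n \<le> 0"
    using affine_form_nonpos_polyhedron affine_form_scale[OF l] by blast
  obtain Ppos where Ppos: "\<forall>n\<in>Zv k. int_to_real n \<in> rat_polyhedron k Ppos \<longleftrightarrow> 1 + -1 * l n \<le> 0"
    using affine_form_nonpos_polyhedron affine_form_add[OF affine_form_const affine_form_scale[OF l]]
    by blast
  let ?ps = "[Pneg, Ple @ Pge, Ppos]"
  have "polyhedral_cover k ?ps"
    unfolding polyhedral_cover_def using Pneg Ple Pge Ppos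
    by (auto simp: rat_polyhedron_append)
  moreover have "\<exists>m>0. \<exists>Y. periodic_mod k m Y \<and> agree_on k (rat_polyhedron k P) {n. R (l n)} Y"
    if "P \<in> set ?ps" for P
  proof -
    have "\<exists>s. \<forall>n\<in>Zv k. int_to_real n \<in> rat_polyhedron k P \<longrightarrow> sgn (l n) = s"
    proof -
      consider "P = Pneg" | "P = Ple @ Pge" | "P = Ppos"
        using \<open>P \<in> set ?ps\<close> by auto
      then show ?thesis
      proof cases
        case 1
        with Pneg show ?thesis by (intro exI[of _ "-1"]) auto
      next
        case 2
        with Ple Pge show ?thesis by (intro exI[of _ 0]) (auto simp: rat_polyhedron_append)
      next
        case 3
        with Ppos show ?thesis by (intro exI[of _ 1]) auto
      qed
    qed
    then obtain s where s: "\<forall>n\<in>Zv k. int_to_real n \<in> rat_polyhedron k P \<longrightarrow> sgn (l n) = s" ..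
    txt \<open>\<open>v mod m + sgn v * m\<close> has the sign of \<open>v\<close> and is congruent to \<open>v\<close>, so on
      this cell \<open>R (l n)\<close> depends only on \<open>l n mod m\<close>.\<close>
    let ?Y = "{n. R (l n mod int m + s * int m)}"
    have "periodic_mod k m ?Y"
      unfolding periodic_mod_def using affine_form_mod_eq[OF l] by simp
    moreover have "agree_on k (rat_polyhedron k P) {n. R (l n)} ?Y"
      unfolding agree_on_def
    proof (intro ballI impI)
      fix n assume "n \<in> Zv k" "int_to_real n \<in> rat_polyhedron k P"
      then have "sgn (l n) = s" using s by blast
      then have "R (l n) \<longleftrightarrow> R (l n mod int m + s * int m)"
        using R sgn_mod_representative[of "int m" "l n"] \<open>m > 0\<close> by simp
      then show "n \<in> {n. R (l n)} \<longleftrightarrow> n \<in> ?Y" by simp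
    qed
    ultimately show ?thesis using \<open>m > 0\<close> by blast
  qed
  ultimately show ?thesis
    unfolding piecewise_periodic_def by blast
qed

lemma affine_form_env_nth: "affine_form k (\<lambda>n. map n [0..<k] ! j)"
proof (cases "j < k")
  case True
  then show ?thesis using affine_form_coord by simp
next
  case False
  txt \<open>Out of range, \<open>!\<close> returns an unspecified value, but one independent of \<open>n\<close>.\<close>
  then have "map n [0..<k] ! j = [] ! (j - k)" for n :: zvec
    using nth_append[of "map n [0..<k]" "[]" j] by simp
  then show ?thesis using affine_form_const by simp
qed

lemma affine_form_Inum: "affine_form k (\<lambda>n. Inum (map n [0..<k]) t)"
proof (induction t)
  case (Neg t)
  then show ?case using affine_form_scale[of k _ "-1"] by simp
next
  case (Sub t1 t2)
  then show ?case using affine_form_add[OF Sub(1) affine_form_scale[OF Sub(2), of "-1"]] by simp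
qed (simp_all add: affine_form_const affine_form_env_nth affine_form_add affine_form_scale)

lemma piecewise_periodic_Inum_atom:
  assumes "m > 0" "\<And>v w. sgn v = sgn w \<Longrightarrow> int m dvd v - w \<Longrightarrow> R v \<longleftrightarrow> R w"
  shows "piecewise_periodic k {n. R (Inum (map n [0..<k]) t)}"
  using piecewise_periodic_affine_atom[OF affine_form_Inum assms] .

text \<open>For \<open>i = 0\<close> divisibility means \<open>v = 0\<close>, a sign condition; the modulus \<open>1\<close> then suffices.\<close>

lemma dvd_sgn_mod_invariant:
  fixes v w :: int
  assumes "sgn v = sgn w" "int (if i = 0 then 1 else nat \<bar>i\<bar>) dvd v - w"
  shows "i dvd v \<longleftrightarrow> i dvd w"
proof (cases "i = 0")
  case True
  with assms(1) show ?thesis by (auto simp: sgn_if split: if_splits)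
next
  case False
  with assms(2) have "i dvd v - w" by simp
  then show ?thesis by (metis dvd_add_right_iff diff_add_cancel)
qed

lemma qfree_piecewise_periodic: "qfree p \<Longrightarrow> piecewise_periodic k {n. Ifm bbs (map n [0..<k]) p}"
proof (induction p)
  case (Lt t)
  show ?case by (simp, rule piecewise_periodic_Inum_atom[of 1]) (auto simp: sgn_if split: if_splits)
next
  case (Le t)
  show ?case by (simp, rule piecewise_periodic_Inum_atom[of 1]) (auto simp: sgn_if split: if_splits)
next
  case (Gt t)
  show ?case by (simp, rule piecewise_periodic_Inum_atom[of 1]) (auto simp: sgn_if split: if_splits)
next
  case (Ge t)
  show ?case by (simp, rule piecewise_periodic_Inum_atom[of 1]) (auto simp: sgn_if split: if_splits)
next
  case (Eq t)
  show ?case by (simp, rule piecewise_periodic_Inum_atom[of 1]) (auto simp: sgn_if split: if_splits)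
next
  case (NEq t)
  show ?case by (simp, rule piecewise_periodic_Inum_atom[of 1]) (auto simp: sgn_if split: if_splits)
next
  case (Dvd i t)
  show ?case
    by (simp, rule piecewise_periodic_Inum_atom[of "if i = 0 then 1 else nat \<bar>i\<bar>"])
      (auto dest: dvd_sgn_mod_invariant)
next
  case (NDvd i t)
  show ?case
    by (simp, rule piecewise_periodic_Inum_atom[of "if i = 0 then 1 else nat \<bar>i\<bar>"])
      (auto dest: dvd_sgn_mod_invariant)
next
  case (Not p)
  then have "piecewise_periodic k {n. Ifm bbs (map n [0..<k]) p}" by simp
  from piecewise_periodic_binop[OF this this, of "\<lambda>a _. \<not> a"] show ?case by simp
next
  case (And p q)
  then show ?case by (auto intro: piecewise_periodic_binop[where h = "(\<and>)"])
next
  case (Or p q)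
  then show ?case by (auto intro: piecewise_periodic_binop[where h = "(\<or>)"])
next
  case (Imp p q)
  then show ?case by (auto intro: piecewise_periodic_binop[where h = "(\<longrightarrow>)"])
next
  case (Iff p q)
  then show ?case by (auto intro: piecewise_periodic_binop[where h = "(=)"])
qed (use piecewise_periodic_const[of k True] piecewise_periodic_const[of k False] in auto)

fun exists_block :: "nat \<Rightarrow> fm \<Rightarrow> fm" where
  "exists_block 0 p = p"
| "exists_block (Suc m) p = exists_block m (E p)"

lemma Ifm_exists_block:
  "Ifm bbs bs (exists_block m p) \<longleftrightarrow> (\<exists>cs. length cs = m \<and> Ifm bbs (cs @ bs) p)"
proof (induction m arbitrary: p)
  case (Suc m)
  have "Ifm bbs bs (exists_block (Suc m) p) \<longleftrightarrow> (\<exists>cs x. length cs = m \<and> Ifm bbs (x # cs @ bs) p)"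
    using Suc by simp
  also have "\<dots> \<longleftrightarrow> (\<exists>cs. length cs = Suc m \<and> Ifm bbs (cs @ bs) p)"
    by (metis Suc_length_conv append_Cons)
  finally show ?case .
qed simp

definition conj_list :: "fm list \<Rightarrow> fm" where
  "conj_list ps = foldr And ps T"

lemma Ifm_conj_list: "Ifm bbs bs (conj_list ps) \<longleftrightarrow> (\<forall>p\<in>set ps. Ifm bbs bs p)"
  unfolding conj_list_def by (induction ps) auto

definition sum_num :: "(nat \<Rightarrow> num) \<Rightarrow> nat list \<Rightarrow> num" where
  "sum_num f js = foldr (\<lambda>j acc. Add (f j) acc) js (C 0)"

lemma Inum_sum_num: "Inum bs (sum_num f js) = (\<Sum>j\<leftarrow>js. Inum bs (f j))"
  unfolding sum_num_def by (induction js) auto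

text \<open>The formula \<open>\<exists>c \<ge> 0. n = a + \<Sum>\<^sub>j c\<^sub>j w\<^sub>j\<close>: \<open>Bound j\<close> for \<open>j < length ws\<close> is the
  coefficient \<open>c\<^sub>j\<close>, and \<open>Bound (length ws + i)\<close> is the coordinate \<open>n i\<close>.\<close>

definition translated_monoid_fm :: "nat \<Rightarrow> zvec \<Rightarrow> zvec list \<Rightarrow> fm" where
  "translated_monoid_fm k a ws = exists_block (length ws) (conj_list
     (map (\<lambda>j. Ge (Bound j)) [0..<length ws] @
      map (\<lambda>i. Eq (Sub (Bound (length ws + i))
        (Add (C (a i)) (sum_num (\<lambda>j. Mul ((ws ! j) i) (Bound j)) [0..<length ws])))) [0..<k]))"

lemma Ifm_translated_monoid_fm:
  "Ifm bbs (map n [0..<k]) (translated_monoid_fm k a ws) \<longleftrightarrow>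
     (\<exists>cs. length cs = length ws \<and> (\<forall>j<length ws. 0 \<le> cs ! j) \<and>
        (\<forall>i<k. n i = a i + (\<Sum>j<length ws. (ws ! j) i * cs ! j)))"
proof -
  let ?m = "length ws"
  have env_fresh: "Inum (cs @ map n [0..<k]) (Bound j) = cs ! j"
    if "length cs = ?m" "j < ?m" for cs j
    using that by (simp add: nth_append)
  have env_free: "Inum (cs @ map n [0..<k]) (Bound (?m + i)) = n i"
    if "length cs = ?m" "i < k" for cs i
    using that by (simp add: nth_append)
  have sum: "(\<Sum>j\<leftarrow>[0..<?m]. (ws ! j) i * Inum (cs @ map n [0..<k]) (Bound j))
      = (\<Sum>j<?m. (ws ! j) i * cs ! j)" if "length cs = ?m" for cs i
    using that by (simp add: nth_append sum_list_sum_nth atLeast0LessThan)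
  show ?thesis
    unfolding translated_monoid_fm_def Ifm_exists_block Ifm_conj_list
    by (rule ex_cong)
      (auto simp: ball_Un Ball_image_comp env_fresh env_free sum Inum_sum_num simp del: Inum.simps(2))
qed

lemma mem_translated_nat_span_iff:
  assumes "n \<in> Zv k" "a \<in> Zv k" "set ws \<subseteq> Zv k"
  shows "n \<in> vadd a ` nat_span ws \<longleftrightarrow>
     (\<exists>cs. length cs = length ws \<and> (\<forall>j<length ws. 0 \<le> cs ! j) \<and>
        (\<forall>i<k. n i = a i + (\<Sum>j<length ws. (ws ! j) i * cs ! j)))"
proof
  assume "n \<in> vadd a ` nat_span ws"
  then obtain c :: "nat \<Rightarrow> nat" where c: "n = vadd a (lincomb (\<lambda>j. int (c j)) ws)"
    unfolding nat_span_def by blast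
  let ?cs = "map (\<lambda>j. int (c j)) [0..<length ws]"
  have "(\<Sum>j<length ws. (ws ! j) i * ?cs ! j) = (\<Sum>j<length ws. int (c j) * (ws ! j) i)" for i
    by (rule sum.cong) auto
  then show "\<exists>cs. length cs = length ws \<and> (\<forall>j<length ws. 0 \<le> cs ! j) \<and>
      (\<forall>i<k. n i = a i + (\<Sum>j<length ws. (ws ! j) i * cs ! j))"
    using c by (intro exI[of _ ?cs]) (simp add: vadd_def lincomb_def)
next
  assume "\<exists>cs. length cs = length ws \<and> (\<forall>j<length ws. 0 \<le> cs ! j) \<and>
      (\<forall>i<k. n i = a i + (\<Sum>j<length ws. (ws ! j) i * cs ! j))"
  then obtain cs where cs: "\<forall>j<length ws. 0 \<le> cs ! j"
      "\<forall>i<k. n i = a i + (\<Sum>j<length ws. (ws ! j) i * cs ! j)" by blast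
  define c where "c = (\<lambda>j. nat (cs ! j))"
  have "n i = vadd a (lincomb (\<lambda>j. int (c j)) ws) i" for i
  proof (cases "i < k")
    case True
    have "(\<Sum>j<length ws. int (c j) * (ws ! j) i) = (\<Sum>j<length ws. (ws ! j) i * cs ! j)"
      by (rule sum.cong) (auto simp: c_def cs(1))
    with True cs(2) show ?thesis by (simp add: vadd_def lincomb_def)
  next
    case False
    have "(ws ! j) i = 0" if "j < length ws" for j
    proof -
      have "ws ! j \<in> Zv k" using assms(3) that by auto
      with False show ?thesis unfolding Zv_def by simp
    qed
    with False assms(1,2) show ?thesis by (simp add: vadd_def lincomb_def Zv_def)
  qed
  then have "n = vadd a (lincomb (\<lambda>j. int (c j)) ws)" ..
  then show "n \<in> vadd a ` nat_span ws"
    unfolding nat_span_def by blast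
qed

lemma piecewise_periodic_translated_nat_span:
  assumes "a \<in> Zv k" "set ws \<subseteq> Zv k"
  shows "piecewise_periodic k (vadd a ` nat_span ws)"
proof -
  txt \<open>\<open>pa\<close> is Cooper's quantifier elimination.\<close>
  let ?p = "pa (translated_monoid_fm k a ws)"
  have "piecewise_periodic k {n. Ifm [] (map n [0..<k]) ?p}"
    using qfree_piecewise_periodic mirqe by blast
  moreover have "Ifm [] (map n [0..<k]) ?p \<longleftrightarrow> n \<in> vadd a ` nat_span ws" if "n \<in> Zv k" for n
    using mem_translated_nat_span_iff[OF that assms] by (simp add: mirqe Ifm_translated_monoid_fm)
  then have "{n. Ifm [] (map n [0..<k]) ?p} \<inter> Zv k = vadd a ` nat_span ws \<inter> Zv k"
    by blast
  ultimately show ?thesis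
    by (rule piecewise_periodic_cong)
qed

definition proj_first :: "nat \<Rightarrow> zvec \<Rightarrow> zvec" where
  "proj_first k g = (\<lambda>i. if i < k then g i else 0)"

lemma proj_first_Zv: "proj_first k g \<in> Zv k"
  unfolding proj_first_def Zv_def by auto

lemma proj_first_vadd: "proj_first k (vadd x y) = vadd (proj_first k x) (proj_first k y)"
  unfolding proj_first_def vadd_def by auto

lemma proj_first_lincomb: "proj_first k (lincomb c vs) = lincomb c (map (proj_first k) vs)"
  unfolding proj_first_def lincomb_def by (auto intro!: sum.cong)

lemma proj_first_translated_nat_span:
  "proj_first k ` vadd q ` nat_span vs = vadd (proj_first k q) ` nat_span (map (proj_first k) vs)"
proof -
  have "nat_span (map (proj_first k) vs) = proj_first k ` nat_span vs"
    unfolding nat_span_def by (auto simp: image_def proj_first_lincomb)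
  then show ?thesis by (auto simp: proj_first_vadd image_image)
qed

lemma piecewise_periodic_proj_semisimple:
  assumes "semisimple m S"
  shows "piecewise_periodic k (proj_first k ` S)"
proof -
  obtain parts :: "(zvec \<times> zvec list) list" where
    S: "S = (\<Union>(q, vs) \<in> set parts. vadd q ` nat_span vs)"
    using assms unfolding semisimple_def by blast
  have "proj_first k ` S = (\<Union>(q, vs) \<in> set parts. proj_first k ` vadd q ` nat_span vs)"
    unfolding S by auto
  also have "piecewise_periodic k \<dots>"
    by (rule piecewise_periodic_UN)
      (auto simp: proj_first_translated_nat_span proj_first_Zv
            intro!: piecewise_periodic_translated_nat_span)
  finally show ?thesis .
qed

section \<open>Supports of constructible families\<close>

lemma constructible_gmod_support:
  fixes act :: "zvec \<Rightarrow> zvec \<Rightarrow> 'k::field mat"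
  assumes "constructible_gmod m P dm act"
  obtains Ss where "finite Ss" "\<forall>S\<in>Ss. semisimple m S" "{g \<in> Zv m. dm g \<noteq> 0} = \<Union>Ss"
proof -
  obtain regions :: "zvec set list" and dI and phi :: "nat \<Rightarrow> zvec \<Rightarrow> 'k mat" where
    semisimple: "\<forall>j<length regions. semisimple m (regions ! j)" and
    cover: "\<Union>(set regions) = Zv m" and
    phi: "\<forall>j<length regions. \<forall>g\<in>regions ! j.
            phi j g \<in> carrier_mat (dm g) (dI j) \<and> invertible_mat (phi j g)"
    using assms unfolding constructible_gmod_def by (elim exE conjE) (rule that; assumption)
  have dim: "dm g = dI j" if "j < length regions" "g \<in> regions ! j" for j g
  proof -
    have "phi j g \<in> carrier_mat (dm g) (dI j)" "invertible_mat (phi j g)"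
      using phi that by auto
    then show ?thesis unfolding invertible_mat_def by auto
  qed
  let ?Ss = "(!) regions ` {j. j < length regions \<and> dI j \<noteq> 0}"
  have "{g \<in> Zv m. dm g \<noteq> 0} = \<Union>?Ss"
  proof
    show "{g \<in> Zv m. dm g \<noteq> 0} \<subseteq> \<Union>?Ss"
    proof
      fix g assume g: "g \<in> {g \<in> Zv m. dm g \<noteq> 0}"
      then obtain j where "j < length regions" "g \<in> regions ! j"
        using cover by (metis (no_types, lifting) UnionE in_set_conv_nth mem_Collect_eq)
      with g dim show "g \<in> \<Union>?Ss" by auto
    qed
    show "\<Union>?Ss \<subseteq> {g \<in> Zv m. dm g \<noteq> 0}"
    proof
      fix g assume "g \<in> \<Union>?Ss"
      then obtain j where "j < length regions" "dI j \<noteq> 0" "g \<in> regions ! j"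
        by blast
      moreover have "regions ! j \<subseteq> Zv m"
        using cover \<open>j < length regions\<close> by auto
      ultimately show "g \<in> {g \<in> Zv m. dm g \<noteq> 0}" using dim by auto
    qed
  qed
  with semisimple show ?thesis
    using that[of ?Ss] by auto
qed

lemma emb_proj_first_Zv:
  assumes "g \<in> Zv (k + d)"
  shows "(\<lambda>i. g (i + k)) \<in> Zv d" and "emb k (proj_first k g) (\<lambda>i. g (i + k)) = g"
  using assms unfolding Zv_def emb_def proj_first_def by auto

lemma proj_first_emb: "n \<in> Zv k \<Longrightarrow> proj_first k (emb k n q) = n"
  unfolding Zv_def emb_def proj_first_def by auto

lemma family_support_eq_proj_first:
  assumes dm: "\<forall>n\<in>Zv k. \<forall>q\<in>Zv d. dm (emb k n q) = dimf n q"
  shows "{n \<in> Zv k. \<exists>q\<in>Zv d. dimf n q \<noteq> 0} = proj_first k ` {g \<in> Zv (k + d). dm g \<noteq> 0}"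
proof
  show "{n \<in> Zv k. \<exists>q\<in>Zv d. dimf n q \<noteq> 0} \<subseteq> proj_first k ` {g \<in> Zv (k + d). dm g \<noteq> 0}"
  proof
    fix n assume "n \<in> {n \<in> Zv k. \<exists>q\<in>Zv d. dimf n q \<noteq> 0}"
    then obtain q where "n \<in> Zv k" "q \<in> Zv d" "dimf n q \<noteq> 0" by blast
    moreover have "emb k n q \<in> Zv (k + d)"
      using \<open>q \<in> Zv d\<close> unfolding emb_def Zv_def by auto
    ultimately have "n = proj_first k (emb k n q)" "emb k n q \<in> {g \<in> Zv (k + d). dm g \<noteq> 0}"
      using dm proj_first_emb by auto
    then show "n \<in> proj_first k ` {g \<in> Zv (k + d). dm g \<noteq> 0}" by (rule image_eqI)
  qed
  show "proj_first k ` {g \<in> Zv (k + d). dm g \<noteq> 0} \<subseteq> {n \<in> Zv k. \<exists>q\<in>Zv d. dimf n q \<noteq> 0}"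
  proof
    fix n assume "n \<in> proj_first k ` {g \<in> Zv (k + d). dm g \<noteq> 0}"
    then obtain g where g: "g \<in> Zv (k + d)" "dm g \<noteq> 0" and n: "n = proj_first k g" by blast
    let ?q = "\<lambda>i. g (i + k)"
    have "n \<in> Zv k" "?q \<in> Zv d" "emb k n ?q = g"
      using emb_proj_first_Zv[OF g(1)] n proj_first_Zv by auto
    moreover from this dm have "dimf n ?q = dm g" by metis
    ultimately show "n \<in> {n \<in> Zv k. \<exists>q\<in>Zv d. dimf n q \<noteq> 0}"
      using g(2) by (intro CollectI conjI bexI[of _ ?q]) simp_all
  qed
qed

lemma piecewise_periodic_family_support:
  fixes actf :: "zvec \<Rightarrow> zvec \<Rightarrow> zvec \<Rightarrow> 'k::field mat"
  assumes "constructible_family k d Qp dimf actf"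
  shows "piecewise_periodic k {n. \<exists>q\<in>Zv d. dimf n q \<noteq> 0}"
proof -
  obtain P dm and act :: "zvec \<Rightarrow> zvec \<Rightarrow> 'k mat" where
    dm: "\<forall>n\<in>Zv k. \<forall>q\<in>Zv d. dm (emb k n q) = dimf n q" and
    gmod: "constructible_gmod (k + d) P dm act"
    using assms unfolding constructible_family_def by (elim exE conjE) (rule that; assumption)
  from gmod obtain Ss where "finite Ss" "\<forall>S\<in>Ss. semisimple (k + d) S"
    and support: "{g \<in> Zv (k + d). dm g \<noteq> 0} = \<Union>Ss"
    by (rule constructible_gmod_support)
  then have "piecewise_periodic k (\<Union>S\<in>Ss. proj_first k ` S)"
    by (intro piecewise_periodic_UN ballI piecewise_periodic_proj_semisimple) auto
  also have "(\<Union>S\<in>Ss. proj_first k ` S) = {n \<in> Zv k. \<exists>q\<in>Zv d. dimf n q \<noteq> 0}"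
    unfolding family_support_eq_proj_first[OF dm] support by (rule image_Union[symmetric])
  finally show ?thesis
    by (rule piecewise_periodic_cong) blast
qed

theorem lemma9p2:
  fixes k d r :: nat
    and Qp :: "zvec set"
    and dimf :: "nat \<Rightarrow> zvec \<Rightarrow> zvec \<Rightarrow> nat"
    and actf :: "nat \<Rightarrow> zvec \<Rightarrow> zvec \<Rightarrow> zvec \<Rightarrow> 'k::field mat"
  assumes "affine_semigroup d Qp"
    and "int_span Qp = Zv d"
    and "\<forall>i\<in>{1..r}. constructible_family k d Qp (dimf i) (actf i)"
  shows "piecewise_quasiconstant k {n \<in> Zv k. \<exists>i\<in>{1..r}. \<exists>q\<in>Zv d. dimf i n q \<noteq> 0}
           (\<lambda>n. Max {i\<in>{1..r}. \<exists>q\<in>Zv d. dimf i n q \<noteq> 0})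
       \<and> piecewise_quasiconstant k {n \<in> Zv k. \<exists>i\<in>{1..r}. \<exists>q\<in>Zv d. dimf i n q \<noteq> 0}
           (\<lambda>n. Min {i\<in>{1..r}. \<exists>q\<in>Zv d. dimf i n q \<noteq> 0})"
proof -
  let ?support = "\<lambda>i. {n. \<exists>q\<in>Zv d. dimf i n q \<noteq> 0}"
  have "\<forall>i\<in>{1..r}. piecewise_periodic k (?support i)"
    using assms(3) by (blast intro: piecewise_periodic_family_support)
  then have "piecewise_quasiconstant k {n \<in> Zv k. \<exists>i\<in>{1..r}. \<exists>q\<in>Zv d. dimf i n q \<noteq> 0}
      (\<lambda>n. \<Phi> {i\<in>{1..r}. n \<in> ?support i})" for \<Phi> :: "nat set \<Rightarrow> nat"
    by (intro piecewise_quasiconstant_fun_of_indicators finite_atLeastAtMost) auto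
  then show ?thesis
    by simp
qed

end
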